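(* Let $S\subseteq V$ be fixed and let $R_1,\dots,R_T$ be $T$ independent IBSs drawn from $\Omega^n$. Let $\mu=\mathbb{E}[Z_j(S)]$. Then for every $\lambda>0$: $$\Pr\Big[\sum_{j=1}^T Z_j(S)-T\mu\ge\lambda\Big]\le\exp\!\left(-\frac{\lambda^2}{\frac{2}{3}\rho\lambda+2p(S)\mu T}\right),$$ $$\Pr\Big[\sum_{j=1}^T Z_j(S)-T\mu\le-\lambda\Big]\le\exp\!\left(-\frac{\lambda^2}{2p(S)\mu T}\right).$$
   Context: Setting: $G=(V,E)$ is a directed graph under the Independent Cascade model with edge probabilities $p(u,v)\in(0,1)$. Each node has benefit $b(u)\ge0$, and $\Gamma=\sum_u b(u)>0$. For each node $u$, $\gamma(u)=1-\prod_{v\in N_{in}(u)}(1-p(v,u))$, and $\Phi=\sum_u\gamma(u)b(u)>0$. IBS distribution $\Omega^n$: pick a source $u$ with probability $\gamma(u)b(u)/\Phi$. Then output the set of nodes that can reach $u$ in a random live-edge graph (each edge kept independently with probability $p(e)$), conditioned on at least one in-edge of $u$ being kept. For $S\subseteq V$ and a sample $R_j$ define the following quantities: - $X_j(S)=\min\{1,|S\cap R_j|\}$; - $\mu_{\min}(S)=\sum_{v\in S}(1-\gamma(v))b(v)/\Gamma$; - $\rho=\Phi/\Gamma$; - $\mu_{\max}(S)=\rho+\mu_{\min}(S)$; - $Z_j(S)=\rho X_j(S)+\mu_{\min}(S)$; - $p(S)=\min\{\rho,\ \mu_{\max}(S)+\mu_{\min}(S)-2\sqrt{\mu_{\min}(S)\mu_{\max}(S)}\}$.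 *)

theory Defs
  imports "HOL-Probability.Probability"
begin

text \<open>Directed graph given by a finite vertex set V and an edge set E (pairs (v,u) = edge v to u);
  p gives edge probabilities, b node benefits.\<close>

definition N_in :: "('a \<times> 'a) set \<Rightarrow> 'a \<Rightarrow> 'a set" where
  "N_in E u = {v. (v, u) \<in> E}"

definition gamma :: "('a \<times> 'a) set \<Rightarrow> ('a \<times> 'a \<Rightarrow> real) \<Rightarrow> 'a \<Rightarrow> real" where
  "gamma E p u = 1 - (\<Prod>v\<in>N_in E u. 1 - p (v, u))"

definition Gamma :: "'a set \<Rightarrow> ('a \<Rightarrow> real) \<Rightarrow> real" where
  "Gamma V b = (\<Sum>u\<in>V. b u)"

definition Phi :: "'a set \<Rightarrow> ('a \<times> 'a) set \<Rightarrow> ('a \<times> 'a \<Rightarrow> real) \<Rightarrow> ('a \<Rightarrow> real) \<Rightarrow> real" where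
  "Phi V E p b = (\<Sum>u\<in>V. gamma E p u * b u)"

definition rho :: "'a set \<Rightarrow> ('a \<times> 'a) set \<Rightarrow> ('a \<times> 'a \<Rightarrow> real) \<Rightarrow> ('a \<Rightarrow> real) \<Rightarrow> real" where
  "rho V E p b = Phi V E p b / Gamma V b"

definition live_pmf :: "('a \<times> 'a) set \<Rightarrow> ('a \<times> 'a \<Rightarrow> real) \<Rightarrow> ('a \<times> 'a \<Rightarrow> bool) pmf" where
  "live_pmf E p = Pi_pmf E False (\<lambda>e. bernoulli_pmf (p e))"

definition live_edges :: "('a \<times> 'a) set \<Rightarrow> ('a \<times> 'a \<Rightarrow> bool) \<Rightarrow> ('a \<times> 'a) set" where
  "live_edges E f = {e \<in> E. f e}"

definition reach_set :: "'a set \<Rightarrow> ('a \<times> 'a) set \<Rightarrow> ('a \<times> 'a \<Rightarrow> bool) \<Rightarrow> 'a \<Rightarrow> 'a set" where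
  "reach_set V E f u = {v \<in> V. (v, u) \<in> (live_edges E f)\<^sup>*}"

definition source_pmf :: "'a set \<Rightarrow> ('a \<times> 'a) set \<Rightarrow> ('a \<times> 'a \<Rightarrow> real) \<Rightarrow> ('a \<Rightarrow> real) \<Rightarrow> 'a pmf" where
  "source_pmf V E p b =
     embed_pmf (\<lambda>u. if u \<in> V then gamma E p u * b u / Phi V E p b else 0)"

definition ibs_pmf :: "'a set \<Rightarrow> ('a \<times> 'a) set \<Rightarrow> ('a \<times> 'a \<Rightarrow> real) \<Rightarrow> ('a \<Rightarrow> real) \<Rightarrow> 'a set pmf" where
  "ibs_pmf V E p b =
     bind_pmf (source_pmf V E p b) (\<lambda>u.
       map_pmf (\<lambda>f. reach_set V E f u)
         (cond_pmf (live_pmf E p) {f. \<exists>v \<in> N_in E u. f (v, u)}))"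

definition X :: "'a set \<Rightarrow> 'a set \<Rightarrow> real" where
  "X S R = real (min 1 (card (S \<inter> R)))"

definition mu_min :: "'a set \<Rightarrow> ('a \<times> 'a) set \<Rightarrow> ('a \<times> 'a \<Rightarrow> real) \<Rightarrow> ('a \<Rightarrow> real) \<Rightarrow> 'a set \<Rightarrow> real" where
  "mu_min V E p b S = (\<Sum>v\<in>S. (1 - gamma E p v) * b v) / Gamma V b"

definition mu_max :: "'a set \<Rightarrow> ('a \<times> 'a) set \<Rightarrow> ('a \<times> 'a \<Rightarrow> real) \<Rightarrow> ('a \<Rightarrow> real) \<Rightarrow> 'a set \<Rightarrow> real" where
  "mu_max V E p b S = rho V E p b + mu_min V E p b S"

definition Z :: "'a set \<Rightarrow> ('a \<times> 'a) set \<Rightarrow> ('a \<times> 'a \<Rightarrow> real) \<Rightarrow> ('a \<Rightarrow> real) \<Rightarrow> 'a set \<Rightarrow> 'a set \<Rightarrow> real" where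
  "Z V E p b S R = rho V E p b * X S R + mu_min V E p b S"

definition pS :: "'a set \<Rightarrow> ('a \<times> 'a) set \<Rightarrow> ('a \<times> 'a \<Rightarrow> real) \<Rightarrow> ('a \<Rightarrow> real) \<Rightarrow> 'a set \<Rightarrow> real" where
  "pS V E p b S = min (rho V E p b)
     (mu_max V E p b S + mu_min V E p b S - 2 * sqrt (mu_min V E p b S * mu_max V E p b S))"

end

theory Submission
  imports Defs
begin

text \<open>Writing \<open>Z(S) = \<rho> X(S) + \<mu>\<^sub>m\<^sub>i\<^sub>n(S)\<close> with \<open>X(S)\<close> a Bernoulli(q) variable, both tails
  are Chernoff bounds for a sum of i.i.d. scaled Bernoulli variables. The upper tail uses
  Bennett's bound on the centred Bernoulli moment generating function together with
  \<open>e\<^sup>t - 1 - t \<le> 3t\<^sup>2/(2(3 - t))\<close>; the lower tail is sub-Gaussian with variance proxy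
  \<open>q(1 - q)\<close> if \<open>q \<le> 1/2\<close> and \<open>1/4\<close> otherwise. With \<open>a = \<surd>\<mu>\<^sub>m\<^sub>i\<^sub>n\<close> and \<open>B = \<surd>\<mu>\<^sub>m\<^sub>a\<^sub>x\<close> one
  has \<open>p(S) = (B - a)\<^sup>2\<close> and \<open>\<mu> = a\<^sup>2 + (B\<^sup>2 - a\<^sup>2) q\<close>, and both proxies times \<open>\<rho>\<^sup>2\<close> are
  bounded by \<open>p(S) \<mu>\<close>.\<close>

lemma nonneg_if_deriv_nonneg:
  fixes f f' :: "real \<Rightarrow> real"
  assumes "\<And>x. 0 \<le> x \<Longrightarrow> (f has_real_derivative f' x) (at x)"
    and "\<And>x. 0 \<le> x \<Longrightarrow> 0 \<le> f' x" and "0 \<le> f 0" and "0 \<le> t"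
  shows "0 \<le> f t"
proof -
  have "f 0 \<le> f t"
    by (rule deriv_nonneg_imp_mono[of 0 t f f']) (use assms in auto)
  with assms(3) show ?thesis by linarith
qed

lemma exp_minus_one_minus_le:
  fixes t :: real
  assumes "0 \<le> t" "t < 3"
  shows "exp t - 1 - t \<le> 3 * t\<^sup>2 / (2 * (3 - t))"
proof -
  have d2: "0 \<le> 2 - 2 * exp x + 2 * x * exp x" if "0 \<le> x" for x :: real
    by (rule nonneg_if_deriv_nonneg[where f' = "\<lambda>x. 2 * x * exp x"])
      (use that in \<open>auto intro!: derivative_eq_intros simp: algebra_simps\<close>)
  have d1: "0 \<le> 2 * x - 4 * exp x + 4 + 2 * x * exp x" if "0 \<le> x" for x :: real
    by (rule nonneg_if_deriv_nonneg[where f' = "\<lambda>x. 2 - 2 * exp x + 2 * x * exp x"])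
      (use that d2 in \<open>auto intro!: derivative_eq_intros simp: algebra_simps\<close>)
  have "0 \<le> 3 * t\<^sup>2 - 2 * (3 - t) * (exp t - 1 - t)"
    by (rule nonneg_if_deriv_nonneg[where f' = "\<lambda>x. 2 * x - 4 * exp x + 4 + 2 * x * exp x"])
      (use assms d1 in \<open>auto intro!: derivative_eq_intros simp: algebra_simps power2_eq_square\<close>)
  with assms show ?thesis by (simp add: field_simps)
qed

text \<open>The moment generating function of \<open>Y - q\<close> for \<open>Y\<close> Bernoulli(q).\<close>

definition bernoulli_mgf :: "real \<Rightarrow> real \<Rightarrow> real" where
  "bernoulli_mgf q t = (1 - q) * exp (- t * q) + q * exp (t * (1 - q))"

definition bernoulli_lower_proxy :: "real \<Rightarrow> real" where
  "bernoulli_lower_proxy q = (if q \<le> 1/2 then q * (1 - q) else 1/4)"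

lemma bernoulli_variance_le_lower_proxy:
  fixes q :: real
  shows "q * (1 - q) \<le> bernoulli_lower_proxy q"
proof -
  have "0 \<le> (q - 1/2)\<^sup>2" by simp
  then show ?thesis by (auto simp: bernoulli_lower_proxy_def power2_eq_square algebra_simps)
qed

text \<open>For \<open>y = e\<^sup>x\<close> this bounds the second derivative of the log-mgf of \<open>q - Y\<close>.\<close>

lemma bernoulli_lower_proxy_bound:
  fixes q y :: real
  assumes "0 \<le> q" "q \<le> 1" "1 \<le> y"
  shows "q * (1 - q) * y \<le> bernoulli_lower_proxy q * ((1 - q) * y + q)\<^sup>2"
proof (cases "q \<le> 1/2")
  case True
  have "q\<^sup>2 \<le> (1 - q)\<^sup>2" using True assms by (intro power_mono) auto
  also have "\<dots> \<le> (1 - q)\<^sup>2 * y" using mult_left_mono[of 1 y "(1 - q)\<^sup>2"] assms by simp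
  finally have "0 \<le> (y - 1) * ((1 - q)\<^sup>2 * y - q\<^sup>2)" using assms by simp
  then have "y \<le> ((1 - q) * y + q)\<^sup>2" by (simp add: algebra_simps power2_eq_square)
  with True assms show ?thesis
    by (auto simp: bernoulli_lower_proxy_def intro: mult_left_mono)
next
  case False
  have "0 \<le> ((1 - q) * y - q)\<^sup>2" by simp
  with False show ?thesis
    by (simp add: bernoulli_lower_proxy_def algebra_simps power2_eq_square)
qed

lemma bernoulli_mgf_le_bennett:
  fixes q t :: real
  assumes q: "0 \<le> q" "q \<le> 1" and t: "0 \<le> t"
  shows "bernoulli_mgf q t \<le> exp (q * (1 - q) * (exp t - 1 - t))"
proof -
  define A where "A x = 1 - q + q * exp x" for x :: real
  have A_ge: "1 \<le> A x" if "0 \<le> x" for x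
    using q that mult_left_mono[of 1 "exp x" q] by (simp add: A_def)
  have "0 \<le> q * (1 - q) * (exp t - 1 - t) - (ln (A t) - q * t)"
  proof (rule nonneg_if_deriv_nonneg
      [where f = "\<lambda>x. q * (1 - q) * (exp x - 1 - x) - (ln (A x) - q * x)"
        and f' = "\<lambda>x. q * (1 - q) * (exp x - 1) - q * exp x / A x + q"])
    fix x :: real
    assume x: "0 \<le> x"
    with A_ge have pos: "0 < A x" by (meson less_le_trans zero_less_one)
    then show "((\<lambda>x. q * (1 - q) * (exp x - 1 - x) - (ln (A x) - q * x)) has_real_derivative
        q * (1 - q) * (exp x - 1) - q * exp x / A x + q) (at x)"
      by (auto intro!: derivative_eq_intros simp: A_def algebra_simps)
    have "q * (1 - q) * (exp x - 1) - q * exp x / A x + q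
        = q * (1 - q) * (exp x - 1) * (A x - 1) / A x"
      using pos by (simp add: A_def field_simps)
    moreover have "0 \<le> q * (1 - q) * (exp x - 1) * (A x - 1)"
      using q x A_ge[OF x] by (intro mult_nonneg_nonneg) auto
    ultimately show "0 \<le> q * (1 - q) * (exp x - 1) - q * exp x / A x + q"
      using pos by simp
  qed (use t in \<open>auto simp: A_def\<close>)
  moreover have "bernoulli_mgf q t = exp (ln (A t) - q * t)"
    using A_ge[OF t] by (simp add: bernoulli_mgf_def A_def exp_diff field_simps flip: exp_add)
  ultimately show ?thesis by simp
qed

lemma bernoulli_mgf_neg_le_subgaussian:
  fixes q t :: real
  assumes q: "0 \<le> q" "q \<le> 1" and t: "0 \<le> t"
  shows "bernoulli_mgf q (- t) \<le> exp (bernoulli_lower_proxy q * t\<^sup>2 / 2)"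
proof -
  define c where "c = bernoulli_lower_proxy q"
  define B where "B x = (1 - q) * exp x + q" for x :: real
  have B_ge: "1 \<le> B x" if "0 \<le> x" for x
    using q that mult_left_mono[of 1 "exp x" "1 - q"] by (simp add: B_def)
  have B_pos: "0 < B x" if "0 \<le> x" for x
    using B_ge[OF that] by linarith
  have slope: "0 \<le> c * x + (1 - q) - (1 - q) * exp x / B x" if "0 \<le> x" for x
  proof (rule nonneg_if_deriv_nonneg[where f = "\<lambda>x. c * x + (1 - q) - (1 - q) * exp x / B x"
        and f' = "\<lambda>x. c - q * (1 - q) * exp x / (B x)\<^sup>2"])
    fix y :: real
    assume y: "0 \<le> y"
    show "((\<lambda>x. c * x + (1 - q) - (1 - q) * exp x / B x) has_real_derivative
        c - q * (1 - q) * exp y / (B y)\<^sup>2) (at y)"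
      using B_pos[OF y] by (auto intro!: derivative_eq_intros simp: B_def field_simps power2_eq_square)
    have "q * (1 - q) * exp y \<le> c * (B y)\<^sup>2"
      using bernoulli_lower_proxy_bound[OF q, of "exp y"] y by (simp add: c_def B_def)
    then show "0 \<le> c - q * (1 - q) * exp y / (B y)\<^sup>2"
      using B_pos[OF y] by (simp add: field_simps)
  qed (use that in \<open>auto simp: B_def\<close>)
  have "0 \<le> c * t\<^sup>2 / 2 - (ln (B t) - (1 - q) * t)"
  proof (rule nonneg_if_deriv_nonneg[where f = "\<lambda>x. c * x\<^sup>2 / 2 - (ln (B x) - (1 - q) * x)"
        and f' = "\<lambda>x. c * x + (1 - q) - (1 - q) * exp x / B x"])
    fix y :: real
    assume "0 \<le> y"
    then show "((\<lambda>x. c * x\<^sup>2 / 2 - (ln (B x) - (1 - q) * x)) has_real_derivative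
        c * y + (1 - q) - (1 - q) * exp y / B y) (at y)"
      using B_pos by (auto intro!: derivative_eq_intros simp: B_def field_simps power2_eq_square)
  qed (use t slope in \<open>auto simp: B_def\<close>)
  moreover have "bernoulli_mgf q (- t) = B t * exp (- ((1 - q) * t))"
    by (simp add: bernoulli_mgf_def B_def algebra_simps flip: exp_add)
  then have "bernoulli_mgf q (- t) = exp (ln (B t) - (1 - q) * t)"
    using B_pos[OF t] by (simp add: exp_diff exp_minus divide_inverse)
  ultimately show ?thesis by (simp add: c_def)
qed

text \<open>The choice \<open>s = \<lambda> / (V + r\<lambda>/3)\<close> in Bernstein's inequality.\<close>

lemma bernstein_exponent_bound:
  fixes r lam A V :: real
  assumes r: "0 < r" and lam: "0 < lam" and A: "0 \<le> A" and AV: "r\<^sup>2 * A \<le> V"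
  shows "\<exists>s\<ge>0. A * (exp (s * r) - 1 - s * r) - s * lam \<le> - (lam\<^sup>2 / (2/3 * r * lam + 2 * V))"
proof -
  have V: "0 \<le> V" using order_trans[OF mult_nonneg_nonneg[OF zero_le_power2 A] AV] .
  define D where "D = V + r * lam / 3"
  have D: "0 < D" using V mult_pos_pos[OF r lam] by (simp add: D_def)
  define s where "s = lam / D"
  have s: "0 \<le> s" using D lam by (simp add: s_def)
  have rhs: "lam\<^sup>2 / (2/3 * r * lam + 2 * V) = s * lam / 2"
    using D by (simp add: s_def D_def field_simps power2_eq_square)
  have "A * (exp (s * r) - 1 - s * r) \<le> s * lam / 2"
  proof (cases "A = 0")
    case True
    then show ?thesis using s lam by simp
  next
    case False
    with A r have "0 < r\<^sup>2 * A" by simp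
    with AV have V_pos: "0 < V" by linarith
    define t where "t = s * r"
    have t: "t = r * lam / D" by (simp add: t_def s_def)
    have three_minus_t: "3 - t = 3 * V / D"
      using D by (simp add: t D_def field_simps)
    have "0 < 3 * V / D" using V_pos D by simp
    then have t_bounds: "0 \<le> t" "t < 3"
      using s r three_minus_t by (simp_all add: t_def)
    have "A * (exp t - 1 - t) \<le> A * (3 * t\<^sup>2 / (2 * (3 - t)))"
      by (intro mult_left_mono exp_minus_one_minus_le t_bounds A)
    also have "\<dots> \<le> V / r\<^sup>2 * (3 * t\<^sup>2 / (2 * (3 - t)))"
      using AV r t_bounds by (intro mult_right_mono) (simp_all add: field_simps)
    also have "\<dots> = V / r\<^sup>2 * (3 * (r * lam / D)\<^sup>2 / (2 * (3 * V / D)))"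
      by (subst three_minus_t) (simp only: t)
    also have "\<dots> = s * lam / 2"
      using D r V_pos by (simp add: s_def field_simps power2_eq_square)
    finally show ?thesis by (simp add: t_def)
  qed
  with s show ?thesis unfolding rhs by (intro exI[of _ s]) linarith
qed

lemma chernoff_Pi_pmf:
  fixes P :: "'b pmf" and Y :: "'b \<Rightarrow> real" and I :: "'i set"
  assumes fin: "finite I" and bnd: "\<And>x. \<bar>Y x\<bar> \<le> K"
  shows "measure_pmf.prob (Pi_pmf I d (\<lambda>_. P)) {Rs. a \<le> (\<Sum>j\<in>I. Y (Rs j))}
     \<le> exp (- a) * (measure_pmf.expectation P (\<lambda>x. exp (Y x))) ^ card I"
proof -
  let ?M = "Pi_pmf I d (\<lambda>_. P)"
  define u where "u Rs = (\<Prod>j\<in>I. exp (Y (Rs j)))" for Rs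
  have "u Rs = exp (\<Sum>j\<in>I. Y (Rs j))" for Rs
    using fin by (simp add: u_def exp_sum)
  then have ev: "{Rs. a \<le> (\<Sum>j\<in>I. Y (Rs j))} = {Rs \<in> space (measure_pmf ?M). exp a \<le> u Rs}"
    by auto
  have exp_bnd: "exp (Y x) \<le> exp K" for x
    using bnd[of x] by simp
  have int_exp: "integrable (measure_pmf P) (\<lambda>x. exp (Y x))"
    by (rule measure_pmf.integrable_const_bound[where B = "exp K"]) (use exp_bnd in auto)
  have int_u: "integrable (measure_pmf ?M) u"
  proof (rule measure_pmf.integrable_const_bound[where B = "exp K ^ card I"])
    show "AE x in measure_pmf ?M. norm (u x) \<le> exp K ^ card I"
    proof (rule AE_pmfI)
      fix x
      have "(\<Prod>j\<in>I. exp (Y (x j))) \<le> (\<Prod>j\<in>I. exp K)"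
        by (intro prod_mono) (use exp_bnd in auto)
      then show "norm (u x) \<le> exp K ^ card I" by (simp add: u_def abs_prod)
    qed
  qed auto
  have "measure_pmf.prob ?M {Rs. a \<le> (\<Sum>j\<in>I. Y (Rs j))} \<le> measure_pmf.expectation ?M u / exp a"
    unfolding ev
    by (rule integral_Markov_inequality_measure[OF int_u]) (auto simp: u_def intro!: prod_nonneg)
  also have "measure_pmf.expectation ?M u = (\<Prod>j\<in>I. measure_pmf.expectation P (\<lambda>x. exp (Y x)))"
    unfolding u_def
    by (rule expectation_prod_Pi_pmf[where f = "\<lambda>_ x. exp (Y x)"]) (use fin int_exp in auto)
  also have "\<dots> = (measure_pmf.expectation P (\<lambda>x. exp (Y x))) ^ card I"
    by simp
  finally show ?thesis by (simp add: exp_minus field_simps)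
qed

lemma integrable_zero_one:
  fixes P :: "'b pmf" and f :: "'b \<Rightarrow> real"
  assumes f01: "\<And>x. f x = 0 \<or> f x = 1"
  shows "integrable (measure_pmf P) f"
proof (rule measure_pmf.integrable_const_bound[where B = 1])
  show "AE x in measure_pmf P. norm (f x) \<le> 1"
  proof (rule AE_pmfI)
    fix x
    show "norm (f x) \<le> 1" using f01[of x] by auto
  qed
qed simp

lemma expectation_comp_zero_one:
  fixes P :: "'b pmf" and f :: "'b \<Rightarrow> real"
  assumes f01: "\<And>x. f x = 0 \<or> f x = 1"
  shows "measure_pmf.expectation P (\<lambda>x. g (f x))
    = (1 - measure_pmf.expectation P f) * g 0 + measure_pmf.expectation P f * g 1"
proof -
  have "g (f x) = g 0 + f x * (g 1 - g 0)" for x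
    using f01[of x] by auto
  then have "measure_pmf.expectation P (\<lambda>x. g (f x))
      = measure_pmf.expectation P (\<lambda>x. g 0 + f x * (g 1 - g 0))"
    by simp
  also have "\<dots> = g 0 + measure_pmf.expectation P f * (g 1 - g 0)"
    using integrable_zero_one[where P = P, OF f01] by simp
  finally show ?thesis by (simp add: algebra_simps)
qed

lemma expectation_zero_one_bounds:
  fixes P :: "'b pmf" and f :: "'b \<Rightarrow> real"
  assumes f01: "\<And>x. f x = 0 \<or> f x = 1"
  shows "0 \<le> measure_pmf.expectation P f" "measure_pmf.expectation P f \<le> 1"
proof -
  have "0 \<le> f x" "f x \<le> 1" for x using f01[of x] by auto
  then show "0 \<le> measure_pmf.expectation P f" "measure_pmf.expectation P f \<le> 1"
    using integral_mono[OF integrable_zero_one[where P = P, OF f01], of "\<lambda>_. 1"]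
    by (auto intro: integral_nonneg)
qed

lemma affine_zero_one_sum_chernoff:
  fixes P :: "'b pmf" and f :: "'b \<Rightarrow> real" and I :: "'i set" and r m :: real
  assumes f01: "\<And>x. f x = 0 \<or> f x = 1" and fin: "finite I"
  defines "q \<equiv> measure_pmf.expectation P f"
    and "\<mu> \<equiv> measure_pmf.expectation P (\<lambda>x. r * f x + m)"
  shows "measure_pmf.prob (Pi_pmf I d (\<lambda>_. P))
      {Rs. a \<le> c * ((\<Sum>j\<in>I. r * f (Rs j) + m) - real (card I) * \<mu>)}
    \<le> exp (- a) * bernoulli_mgf q (c * r) ^ card I"
proof -
  have q: "0 \<le> q" "q \<le> 1" unfolding q_def by (rule expectation_zero_one_bounds[OF f01])+
  have \<mu>: "\<mu> = r * q + m"
    unfolding \<mu>_def q_def expectation_comp_zero_one[OF f01, of P "\<lambda>z. r * z + m"]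
    by (simp add: algebra_simps)
  define Y where "Y x = c * r * (f x - q)" for x
  have "\<bar>f x - q\<bar> \<le> 1" for x using f01[of x] q by auto
  then have "\<bar>Y x\<bar> \<le> \<bar>c * r\<bar>" for x
    by (simp add: Y_def abs_mult mult_left_le)
  from chernoff_Pi_pmf[OF fin this]
  have "measure_pmf.prob (Pi_pmf I d (\<lambda>_. P)) {Rs. a \<le> (\<Sum>j\<in>I. Y (Rs j))}
      \<le> exp (- a) * (measure_pmf.expectation P (\<lambda>x. exp (Y x))) ^ card I" .
  moreover have "measure_pmf.expectation P (\<lambda>x. exp (Y x))
      = (1 - q) * exp (c * r * (0 - q)) + q * exp (c * r * (1 - q))"
    using expectation_comp_zero_one[OF f01, of P "\<lambda>z. exp (c * r * (z - q))"]
    by (simp add: Y_def q_def)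
  then have "measure_pmf.expectation P (\<lambda>x. exp (Y x)) = bernoulli_mgf q (c * r)"
    by (simp add: bernoulli_mgf_def algebra_simps)
  moreover have "(\<Sum>j\<in>I. Y (Rs j)) = c * ((\<Sum>j\<in>I. r * f (Rs j) + m) - real (card I) * \<mu>)" for Rs
    by (simp add: Y_def \<mu> sum_distrib_left sum_subtractf sum.distrib algebra_simps)
  ultimately show ?thesis by simp
qed

lemma affine_zero_one_sum_upper_tail:
  fixes P :: "'b pmf" and f :: "'b \<Rightarrow> real" and I :: "'i set" and r m :: real
  assumes f01: "\<And>x. f x = 0 \<or> f x = 1" and fin: "finite I"
    and r: "0 < r" and lam: "0 < lam"
  defines "q \<equiv> measure_pmf.expectation P f"
    and "\<mu> \<equiv> measure_pmf.expectation P (\<lambda>x. r * f x + m)"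
  assumes var: "r\<^sup>2 * (q * (1 - q)) \<le> W"
  shows "measure_pmf.prob (Pi_pmf I d (\<lambda>_. P))
      {Rs. (\<Sum>j\<in>I. r * f (Rs j) + m) - real (card I) * \<mu> \<ge> lam}
    \<le> exp (- (lam\<^sup>2 / (2/3 * r * lam + 2 * W * real (card I))))"
proof -
  let ?M = "Pi_pmf I d (\<lambda>_. P)" and ?D = "\<lambda>Rs. (\<Sum>j\<in>I. r * f (Rs j) + m) - real (card I) * \<mu>"
  let ?n = "real (card I)"
  have q: "0 \<le> q" "q \<le> 1" unfolding q_def by (rule expectation_zero_one_bounds[OF f01])+
  have "r\<^sup>2 * (?n * (q * (1 - q))) \<le> W * ?n"
    using mult_right_mono[OF var, of ?n] by (simp add: algebra_simps)
  then obtain s where s: "0 \<le> s" and exponent: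
    "?n * (q * (1 - q)) * (exp (s * r) - 1 - s * r) - s * lam
      \<le> - (lam\<^sup>2 / (2/3 * r * lam + 2 * W * ?n))"
    using bernstein_exponent_bound[OF r lam, of "?n * (q * (1 - q))" "W * ?n"] q
    by (auto simp: mult.assoc)
  have "measure_pmf.prob ?M {Rs. ?D Rs \<ge> lam} \<le> measure_pmf.prob ?M {Rs. s * lam \<le> s * ?D Rs}"
    using s by (intro measure_pmf.finite_measure_mono) (auto intro: mult_left_mono)
  also have "\<dots> \<le> exp (- (s * lam)) * bernoulli_mgf q (s * r) ^ card I"
    using affine_zero_one_sum_chernoff[OF f01 fin] by (simp add: q_def \<mu>_def)
  also have "\<dots> \<le> exp (- (s * lam)) * exp (q * (1 - q) * (exp (s * r) - 1 - s * r)) ^ card I"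
    using q s r by (intro mult_left_mono power_mono bernoulli_mgf_le_bennett)
      (auto simp: bernoulli_mgf_def)
  also have "\<dots> = exp (?n * (q * (1 - q)) * (exp (s * r) - 1 - s * r) - s * lam)"
    by (simp add: exp_of_nat_mult[symmetric] exp_add[symmetric] algebra_simps)
  also have "\<dots> \<le> exp (- (lam\<^sup>2 / (2/3 * r * lam + 2 * W * ?n)))"
    using exponent by simp
  finally show ?thesis .
qed

lemma affine_zero_one_sum_lower_tail:
  fixes P :: "'b pmf" and f :: "'b \<Rightarrow> real" and I :: "'i set" and r m :: real
  assumes f01: "\<And>x. f x = 0 \<or> f x = 1" and fin: "finite I"
    and r: "0 < r" and lam: "0 < lam"
  defines "q \<equiv> measure_pmf.expectation P f"
    and "\<mu> \<equiv> measure_pmf.expectation P (\<lambda>x. r * f x + m)"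
  assumes var: "r\<^sup>2 * bernoulli_lower_proxy q \<le> W"
  shows "measure_pmf.prob (Pi_pmf I d (\<lambda>_. P))
      {Rs. (\<Sum>j\<in>I. r * f (Rs j) + m) - real (card I) * \<mu> \<le> - lam}
    \<le> exp (- (lam\<^sup>2 / (2 * W * real (card I))))"
proof -
  let ?M = "Pi_pmf I d (\<lambda>_. P)" and ?D = "\<lambda>Rs. (\<Sum>j\<in>I. r * f (Rs j) + m) - real (card I) * \<mu>"
  define V where "V = W * real (card I)"
  have q: "0 \<le> q" "q \<le> 1" unfolding q_def by (rule expectation_zero_one_bounds[OF f01])+
  then have "0 \<le> bernoulli_lower_proxy q" by (simp add: bernoulli_lower_proxy_def)
  then have "0 \<le> W" using order_trans[OF mult_nonneg_nonneg[OF zero_le_power2] var] by blast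
  then have "0 \<le> V" by (simp add: V_def)
  show ?thesis
  proof (cases "V = 0")
    case True
    \<comment> \<open>the bound is then \<open>exp (- (lam\<^sup>2 / 0)) = 1\<close>\<close>
    then show ?thesis by (simp add: V_def[symmetric] mult.assoc)
  next
    case False
    with \<open>0 \<le> V\<close> have V: "0 < V" by simp
    define s where "s = lam / V"
    have s: "0 \<le> s" using V lam by (simp add: s_def)
    have "s * lam \<le> (- s) * ?D Rs" if "?D Rs \<le> - lam" for Rs
      using mult_left_mono[of lam "- ?D Rs" s] that s by (simp add: algebra_simps)
    then have "measure_pmf.prob ?M {Rs. ?D Rs \<le> - lam}
        \<le> measure_pmf.prob ?M {Rs. s * lam \<le> (- s) * ?D Rs}"
      by (intro measure_pmf.finite_measure_mono) auto
    also have "\<dots> \<le> exp (- (s * lam)) * bernoulli_mgf q (- s * r) ^ card I"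
      using affine_zero_one_sum_chernoff[where f = f and c = "- s", OF f01 fin]
      by (simp only: q_def \<mu>_def)
    also have "\<dots> \<le> exp (- (s * lam)) * exp (bernoulli_lower_proxy q * (s * r)\<^sup>2 / 2) ^ card I"
      using q s r bernoulli_mgf_neg_le_subgaussian[of q "s * r"]
      by (intro mult_left_mono power_mono) (auto simp: bernoulli_mgf_def)
    also have "\<dots> \<le> exp (- (s * lam)) * exp (W * s\<^sup>2 / 2) ^ card I"
    proof -
      have "bernoulli_lower_proxy q * (s * r)\<^sup>2 / 2 = r\<^sup>2 * bernoulli_lower_proxy q * s\<^sup>2 / 2"
        by (simp add: power_mult_distrib)
      also have "\<dots> \<le> W * s\<^sup>2 / 2"
        using var by (intro divide_right_mono mult_right_mono) auto
      finally show ?thesis by (intro mult_left_mono power_mono) auto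
    qed
    also have "\<dots> = exp (V * s\<^sup>2 / 2 - s * lam)"
      by (simp add: V_def exp_of_nat_mult[symmetric] exp_add[symmetric] algebra_simps)
    also have "V * s\<^sup>2 / 2 - s * lam = - (lam\<^sup>2 / (2 * W * real (card I)))"
      using V by (simp add: s_def V_def[symmetric] mult.assoc field_simps power2_eq_square)
    finally show ?thesis .
  qed
qed

lemma bernoulli_lower_proxy_le_interpolation:
  fixes a B q :: real
  assumes "0 \<le> a" "a \<le> B" "0 \<le> q" "q \<le> 1"
  shows "(B + a)\<^sup>2 * bernoulli_lower_proxy q \<le> a\<^sup>2 + (B\<^sup>2 - a\<^sup>2) * q"
proof (cases "q \<le> 1/2")
  case True
  have "a\<^sup>2 + (B\<^sup>2 - a\<^sup>2) * q - (B + a)\<^sup>2 * (q * (1 - q)) = ((B + a) * q - a)\<^sup>2"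
    by (simp add: power2_eq_square algebra_simps)
  then have "(B + a)\<^sup>2 * (q * (1 - q)) \<le> a\<^sup>2 + (B\<^sup>2 - a\<^sup>2) * q"
    using zero_le_power2[of "(B + a) * q - a"] by linarith
  with True show ?thesis by (simp add: bernoulli_lower_proxy_def)
next
  case False
  have "(B + a)\<^sup>2 * (1/4) = (B\<^sup>2 + a\<^sup>2) / 2 - (B - a)\<^sup>2 / 4"
    by (simp add: power2_eq_square field_simps)
  also have "\<dots> \<le> a\<^sup>2 + (B\<^sup>2 - a\<^sup>2) * (1/2)"
    by (simp add: field_simps)
  also have "\<dots> \<le> a\<^sup>2 + (B\<^sup>2 - a\<^sup>2) * q"
    using False assms by (intro add_left_mono mult_left_mono) (auto intro: power_mono)
  finally show ?thesis using False by (simp add: bernoulli_lower_proxy_def)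
qed

lemma sq_mul_bernoulli_lower_proxy_le_pS:
  fixes r m q :: real
  assumes r: "0 < r" and m: "0 \<le> m" and q: "0 \<le> q" "q \<le> 1"
  shows "r\<^sup>2 * bernoulli_lower_proxy q
    \<le> min r ((r + m) + m - 2 * sqrt (m * (r + m))) * (r * q + m)"
proof -
  define a where "a = sqrt m"
  define B where "B = sqrt (r + m)"
  have a: "0 \<le> a" "a\<^sup>2 = m" using m by (simp_all add: a_def)
  have B: "B\<^sup>2 = r + m" using m r by (simp add: B_def)
  have aB: "a \<le> B" unfolding a_def B_def using r by (intro real_sqrt_le_mono) simp
  have "sqrt (m * (r + m)) = a * B" by (simp add: a_def B_def real_sqrt_mult)
  then have "(r + m) + m - 2 * sqrt (m * (r + m)) = (B - a)\<^sup>2"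
    using a B by (simp add: power2_eq_square algebra_simps)
  moreover have "(B - a)\<^sup>2 \<le> r"
    using a B mult_left_mono[OF aB a(1)] by (simp add: power2_eq_square algebra_simps)
  ultimately have "min r ((r + m) + m - 2 * sqrt (m * (r + m))) * (r * q + m)
      = (B - a)\<^sup>2 * (a\<^sup>2 + (B\<^sup>2 - a\<^sup>2) * q)"
    using a B by (simp add: algebra_simps)
  moreover have "r = (B - a) * (B + a)"
    using a B by (simp add: power2_eq_square algebra_simps)
  then have "r\<^sup>2 = (B - a)\<^sup>2 * (B + a)\<^sup>2"
    by (simp add: power_mult_distrib)
  ultimately show ?thesis
    using bernoulli_lower_proxy_le_interpolation[OF a(1) aB q] by (simp add: mult.assoc mult_left_mono)
qed

lemma X_zero_one: "X S R = 0 \<or> X S R = 1"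
  unfolding X_def by (cases "card (S \<inter> R)") auto

lemma mu_min_nonneg:
  assumes "\<forall>e\<in>E. p e \<le> 1" and "\<forall>u\<in>S. 0 \<le> b u" and "0 \<le> Gamma V b"
  shows "0 \<le> mu_min V E p b S"
proof -
  have "0 \<le> (\<Prod>w\<in>N_in E v. 1 - p (w, v))" for v
    by (intro prod_nonneg) (use assms(1) in \<open>auto simp: N_in_def\<close>)
  then have "0 \<le> 1 - gamma E p v" for v
    by (simp add: gamma_def)
  with assms(2,3) show ?thesis
    unfolding mu_min_def by (auto intro!: divide_nonneg_nonneg sum_nonneg)
qed

theorem lemma5:
  fixes V :: "'a set" and E :: "('a \<times> 'a) set" and p :: "'a \<times> 'a \<Rightarrow> real"
    and b :: "'a \<Rightarrow> real" and S :: "'a set" and T :: nat and lam :: real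
  assumes "finite V" and "E \<subseteq> V \<times> V"
    and "\<forall>e\<in>E. 0 < p e \<and> p e < 1"
    and "\<forall>u\<in>V. 0 \<le> b u"
    and "Gamma V b > 0" and "Phi V E p b > 0"
    and "S \<subseteq> V" and "lam > 0"
  defines "\<mu> \<equiv> measure_pmf.expectation (ibs_pmf V E p b) (\<lambda>R. Z V E p b S R)"
  shows "(measure_pmf.prob (Pi_pmf {1..T} {} (\<lambda>_. ibs_pmf V E p b))
            {Rs. (\<Sum>j\<in>{1..T}. Z V E p b S (Rs j)) - real T * \<mu> \<ge> lam}
          \<le> exp (- (lam\<^sup>2 / (2/3 * rho V E p b * lam + 2 * pS V E p b S * \<mu> * real T))))
       \<and> (measure_pmf.prob (Pi_pmf {1..T} {} (\<lambda>_. ibs_pmf V E p b))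
            {Rs. (\<Sum>j\<in>{1..T}. Z V E p b S (Rs j)) - real T * \<mu> \<le> - lam}
          \<le> exp (- (lam\<^sup>2 / (2 * pS V E p b S * \<mu> * real T))))"
proof -
  define P where "P = ibs_pmf V E p b"
  define r where "r = rho V E p b"
  define m where "m = mu_min V E p b S"
  define q where "q = measure_pmf.expectation P (X S)"
  have r: "0 < r" unfolding r_def rho_def using assms(5,6) by simp
  have m: "0 \<le> m"
    unfolding m_def using assms(3-5,7) by (intro mu_min_nonneg) auto
  have Z: "Z V E p b S = (\<lambda>R. r * X S R + m)"
    by (simp add: Z_def r_def m_def fun_eq_iff)
  have q: "0 \<le> q" "q \<le> 1" unfolding q_def by (rule expectation_zero_one_bounds[OF X_zero_one])+
  have \<mu>: "\<mu> = r * q + m"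
    unfolding \<mu>_def Z q_def P_def expectation_comp_zero_one[OF X_zero_one, of _ "\<lambda>z. r * z + m"]
    by (simp add: algebra_simps)
  have var: "r\<^sup>2 * bernoulli_lower_proxy q \<le> pS V E p b S * \<mu>"
    using sq_mul_bernoulli_lower_proxy_le_pS[OF r m q]
    by (simp add: \<mu> pS_def mu_max_def r_def m_def add.commute)
  have var_upper: "r\<^sup>2 * (q * (1 - q)) \<le> pS V E p b S * \<mu>"
    using var mult_left_mono[OF bernoulli_variance_le_lower_proxy[of q] zero_le_power2[of r]]
    by linarith
  have \<mu>_P: "\<mu> = measure_pmf.expectation P (\<lambda>R. r * X S R + m)"
    by (simp add: \<mu>_def Z P_def)
  note tail_bounds =
    affine_zero_one_sum_upper_tail[where P = P and f = "X S" and I = "{1..T}" and d = "{}" and m = m,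
      OF X_zero_one _ r assms(8), folded q_def \<mu>_P, OF _ var_upper]
    affine_zero_one_sum_lower_tail[where P = P and f = "X S" and I = "{1..T}" and d = "{}" and m = m,
      OF X_zero_one _ r assms(8), folded q_def \<mu>_P, OF _ var]
  show ?thesis
    using tail_bounds unfolding Z P_def[symmetric] r_def[symmetric] by (simp add: mult.assoc)
qed

end
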